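(* Let $\alpha$ be a countable ordinal and $S$ a sierpinskisation of $\alpha$ and $\omega$. Then $[\omega]^{<\omega}$ is not embeddable (as a poset) in $I_{<\omega}(S)$.
   Context: A sierpinskisation of a countable order type $\alpha$ and $\omega$ is a poset $(S,\le)$ whose order is the intersection of two linear orders on $S$, one of type $\alpha$ and one of type $\omega$. $I_{<\omega}(S)$ is the set of finitely generated initial segments of $S$ ordered by inclusion. $[\omega]^{<\omega}$ is the set of finite subsets of $\mathbb{N}$ ordered by inclusion. *)

theory Defs
  imports Main "HOL-Library.Countable_Set"
begin

(* Ordinals are represented as well-order relations; order type equality is ordIso.
   A sierpinskisation of alpha and omega: a poset (S, P) where P is the intersection
   of two linear orders on S, one isomorphic to alpha and one isomorphic to omega (natLeq).
   (A linear order isomorphic to a well-order is itself a well-order.) *)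
definition sierpinskisation :: "'b rel \<Rightarrow> 'a set \<Rightarrow> 'a rel \<Rightarrow> bool" where
  "sierpinskisation \<alpha> S P \<longleftrightarrow>
     (\<exists>r1 r2. Well_order r1 \<and> Field r1 = S \<and> (r1, \<alpha>) \<in> ordIso \<and>
              Well_order r2 \<and> Field r2 = S \<and> (r2, natLeq) \<in> ordIso \<and>
              P = r1 \<inter> r2)"

definition down_closure :: "'a rel \<Rightarrow> 'a set \<Rightarrow> 'a set" where
  "down_closure P F = {x. \<exists>y\<in>F. (x, y) \<in> P}"

definition fin_gen_initial_segments :: "'a set \<Rightarrow> 'a rel \<Rightarrow> 'a set set" where
  "fin_gen_initial_segments S P = {down_closure P F | F. finite F \<and> F \<subseteq> S}"

end

theory Submission
  imports Defs
begin

text \<open>A sierpinskisation of a well order and \<open>\<omega>\<close> has no infinite antichain: the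
\<open>r\<^sub>1\<close>-least element \<open>x\<close> of an infinite set is \<open>r\<^sub>2\<close>-above only finitely many of its
elements, so it lies below some other element in both orders. On the other hand an
embedding \<open>f\<close> of \<open>[\<omega>]\<^sup><\<^sup>\<omega>\<close> into \<open>I\<^sub><\<^sub>\<omega>(S)\<close> yields one: every \<open>f {n}\<close> has a generator lying
in no \<open>f {m}\<close> with \<open>m \<noteq> n\<close>, since otherwise \<open>f {n}\<close> would be contained in \<open>f B\<close> for a
finite set \<open>B\<close> not containing \<open>n\<close>; distinct such generators are incomparable.\<close>

lemma finite_lower_set_if_ordIso_natLeq:
  assumes "(r, natLeq) \<in> ordIso"
  shows "finite {y. (y, x) \<in> r}"
proof (cases "x \<in> Field r")
  case True
  obtain h where "iso r natLeq h" using assms unfolding ordIso_def by auto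
  then have bij: "bij_betw h (Field r) (Field natLeq)"
    and ord: "\<forall>a \<in> Field r. \<forall>b \<in> Field r. (a, b) \<in> r \<longleftrightarrow> (h a, h b) \<in> natLeq"
    unfolding iso_iff2 by auto
  have lower_in_Field: "{y. (y, x) \<in> r} \<subseteq> Field r" by (auto simp: Field_def)
  have "h ` {y. (y, x) \<in> r} \<subseteq> {..h x}"
    using ord True lower_in_Field by (auto simp: natLeq_def)
  moreover have "inj_on h {y. (y, x) \<in> r}"
    using bij lower_in_Field by (meson bij_betw_def inj_on_subset)
  ultimately show ?thesis by (meson finite_atMost finite_imageD finite_subset)
next
  case False
  then have "{y. (y, x) \<in> r} = {}" by (auto simp: Field_def)
  then show ?thesis by simp
qed

lemma wo_inter_finite_lower_sets_no_infinite_antichain: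
  assumes wo1: "wo_rel r1" and wo2: "wo_rel r2"
    and Field_r1: "Field r1 = Field r2"
    and fin: "\<And>x. finite {y. (y, x) \<in> r2}"
    and A: "infinite A" "A \<subseteq> Field r1"
  shows "\<exists>x\<in>A. \<exists>y\<in>A. x \<noteq> y \<and> (x, y) \<in> r1 \<inter> r2"
proof -
  define x where "x = wo_rel.minim r1 A"
  have A_ne: "A \<noteq> {}" using A(1) by auto
  have x_in: "x \<in> A" unfolding x_def using wo_rel.minim_in[OF wo1 A(2) A_ne] .
  have x_least: "\<And>y. y \<in> A \<Longrightarrow> (x, y) \<in> r1"
    unfolding x_def using wo_rel.minim_least[OF wo1 A(2)] by blast
  have "infinite (A - insert x {y. (y, x) \<in> r2})"
    using Diff_infinite_finite[OF finite.insertI[OF fin] A(1)] .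
  then obtain y where y: "y \<in> A" "y \<noteq> x" "(y, x) \<notin> r2"
    using infinite_imp_nonempty by blast
  have "x \<in> Field r2" "y \<in> Field r2" using x_in y(1) A(2) Field_r1 by auto
  then have "(x, y) \<in> r2"
    using wo_rel.TOTALS[OF wo2] y(3) by blast
  moreover have "(x, y) \<in> r1" by (rule x_least[OF y(1)])
  ultimately show ?thesis using x_in y(1,2) by (metis IntI)
qed

lemma sierpinskisation_no_infinite_antichain:
  assumes "sierpinskisation \<alpha> S P" "infinite A" "A \<subseteq> S"
  shows "\<exists>x\<in>A. \<exists>y\<in>A. x \<noteq> y \<and> (x, y) \<in> P"
proof -
  obtain r1 r2 where wo: "Well_order r1" "Well_order r2" and Field: "Field r1 = S" "Field r2 = S"
    and iso: "(r2, natLeq) \<in> ordIso" and P: "P = r1 \<inter> r2"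
    using assms(1) unfolding sierpinskisation_def by blast
  show ?thesis
    unfolding P
  proof (rule wo_inter_finite_lower_sets_no_infinite_antichain)
    show "wo_rel r1" "wo_rel r2" using wo by (simp_all add: wo_rel_def)
  qed (use Field assms(2,3) finite_lower_set_if_ordIso_natLeq[OF iso] in auto)
qed

lemma sierpinskisation_preorder:
  assumes "sierpinskisation \<alpha> S P"
  shows "refl_on S P" "trans P"
proof -
  obtain r1 r2 where wo: "wo_rel r1" "wo_rel r2" and Field: "Field r1 = S" "Field r2 = S"
    and P: "P = r1 \<inter> r2"
    using assms unfolding sierpinskisation_def wo_rel_def by blast
  have "refl_on S r1" "refl_on S r2"
    using wo_rel.REFL[OF wo(1)] wo_rel.REFL[OF wo(2)] Field by simp_all
  then show "refl_on S P" unfolding P refl_on_def by blast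
  show "trans P" unfolding P using wo_rel.TRANS wo by (blast intro: trans_Int)
qed

lemma down_closure_subset_down_closure:
  assumes "trans P" "F \<subseteq> down_closure P G"
  shows "down_closure P F \<subseteq> down_closure P G"
  using assms unfolding down_closure_def by (blast dest: transD)

lemma embedding_into_fin_gen_initial_segments_antichain:
  fixes f :: "nat set \<Rightarrow> 'a set"
  assumes trans: "trans P"
    and into: "\<And>A. finite A \<Longrightarrow> f A \<in> fin_gen_initial_segments S P"
    and emb: "\<And>A B. finite A \<Longrightarrow> finite B \<Longrightarrow> A \<subseteq> B \<longleftrightarrow> f A \<subseteq> f B"
  shows "\<exists>g :: nat \<Rightarrow> 'a. (\<forall>n. g n \<in> S) \<and> (\<forall>n m. n \<noteq> m \<longrightarrow> (g n, g m) \<notin> P)"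
proof -
  have "\<forall>n. \<exists>F. f {n} = down_closure P F \<and> finite F \<and> F \<subseteq> S"
    using into unfolding fin_gen_initial_segments_def by blast
  then obtain F where F: "\<And>n. f {n} = down_closure P (F n)" "\<And>n. finite (F n)" "\<And>n. F n \<subseteq> S"
    by metis
  have "\<exists>y\<in>F n. \<forall>m. m \<noteq> n \<longrightarrow> y \<notin> f {m}" for n
  proof (rule ccontr)
    assume "\<not> ?thesis"
    then obtain other where other: "\<And>y. y \<in> F n \<Longrightarrow> other y \<noteq> n \<and> y \<in> f {other y}"
      by metis
    define B where "B = other ` F n"
    have finB: "finite B" using F(2) B_def by simp
    obtain G where G: "f B = down_closure P G"
      using into[OF finB] unfolding fin_gen_initial_segments_def by blast
    have "y \<in> f B" if y: "y \<in> F n" for y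
    proof -
      have "f {other y} \<subseteq> f B" using emb[of "{other y}" B] finB y B_def by simp
      moreover have "y \<in> f {other y}" using other[OF y] by simp
      ultimately show ?thesis by (rule subsetD)
    qed
    then have "F n \<subseteq> down_closure P G" unfolding G by blast
    then have "f {n} \<subseteq> f B"
      unfolding F(1) G by (rule down_closure_subset_down_closure[OF trans])
    then have "{n} \<subseteq> B" using emb[of "{n}" B] finB by blast
    then show False using other B_def by auto
  qed
  then obtain g where g: "\<And>n. g n \<in> F n" "\<And>n m. m \<noteq> n \<Longrightarrow> g n \<notin> f {m}"
    by metis
  have gS: "g n \<in> S" for n using g(1) F(3) by blast
  have gP: "(g n, g m) \<notin> P" if "n \<noteq> m" for n m
  proof
    assume "(g n, g m) \<in> P"
    then have "g n \<in> f {m}" unfolding F(1) down_closure_def using g(1) by blast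
    then show False using g(2) that by simp
  qed
  show ?thesis by (intro exI[of _ g] conjI allI impI gS gP)
qed

theorem lemma2p2:
  fixes \<alpha> :: "'b rel" and S :: "'a set" and P :: "'a rel"
  assumes "Well_order \<alpha>" and "countable (Field \<alpha>)"
    and "sierpinskisation \<alpha> S P"
  shows "\<not> (\<exists>f :: nat set \<Rightarrow> 'a set.
             (\<forall>A. finite A \<longrightarrow> f A \<in> fin_gen_initial_segments S P) \<and>
             (\<forall>A B. finite A \<longrightarrow> finite B \<longrightarrow> (A \<subseteq> B \<longleftrightarrow> f A \<subseteq> f B)))"
proof
  assume "\<exists>f :: nat set \<Rightarrow> 'a set.
             (\<forall>A. finite A \<longrightarrow> f A \<in> fin_gen_initial_segments S P) \<and>
             (\<forall>A B. finite A \<longrightarrow> finite B \<longrightarrow> (A \<subseteq> B \<longleftrightarrow> f A \<subseteq> f B))"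
  then obtain f :: "nat set \<Rightarrow> 'a set" where
    into: "\<And>A. finite A \<Longrightarrow> f A \<in> fin_gen_initial_segments S P"
    and emb: "\<And>A B. finite A \<Longrightarrow> finite B \<Longrightarrow> A \<subseteq> B \<longleftrightarrow> f A \<subseteq> f B"
    by blast
  obtain g :: "nat \<Rightarrow> 'a" where g: "\<forall>n. g n \<in> S" "\<forall>n m. n \<noteq> m \<longrightarrow> (g n, g m) \<notin> P"
    using embedding_into_fin_gen_initial_segments_antichain[OF sierpinskisation_preorder(2)[OF assms(3)] into emb]
    by auto
  have "inj g"
    using g sierpinskisation_preorder(1)[OF assms(3)] by (metis injI refl_onD)
  then have "infinite (range g)" by (rule range_inj_infinite)
  moreover have "range g \<subseteq> S" using g(1) by auto
  ultimately obtain x y where "x \<in> range g" "y \<in> range g" "x \<noteq> y" "(x, y) \<in> P"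
    using sierpinskisation_no_infinite_antichain[OF assms(3)] by meson
  then show False using g(2) by (metis imageE)
qed

end
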